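(* Let $\boldsymbol p=(p,0,r)\in\mathbb{Z}^3$ with $1\le p\le r$. Then $$A(\boldsymbol a;\boldsymbol p)=\frac{1}{(\gamma-\alpha)_{r-p}(\gamma-\beta)_r}\begin{pmatrix}\dfrac{(\gamma)_r\,\phi_{11}^{(r-1)}}{(\alpha+1)_{p-1}} & \dfrac{(\gamma+1)_{r-1}\,\phi_{12}^{(r-1)}}{(\alpha+1)_{p-1}}\\[3mm] \dfrac{(\gamma)_{r+1}\,\phi_{21}^{(r-1)}}{(\alpha+1)_p} & \dfrac{(\gamma+1)_r\,\phi_{22}^{(r)}}{(\alpha+1)_p}\end{pmatrix},$$ where each $\phi_{ij}^{(k)}=\phi_{ij}^{(k)}(\boldsymbol a;\boldsymbol p)$ is a polynomial in $\alpha,\beta,\gamma$ (with coefficients rational in $z$) of degree at most $k$ in the variables $(\alpha,\gamma)$. Moreover $$\det A(\boldsymbol a;\boldsymbol p)=\frac{z^{-r}(z-1)^{r-p}(\gamma)_r(\gamma+1)_r}{(\alpha+1)_p(\gamma-\alpha)_{r-p}(\gamma-\beta)_r}.$$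
   Context: Write $\boldsymbol a=(\alpha,\beta,\gamma)$, ${}_2F_1(\boldsymbol a;z)={}_2F_1(\alpha,\beta;\gamma;z)$, $\boldsymbol 1=(1,1,1)$. For $\boldsymbol p\in\mathbb{Z}^3$ let $r(\boldsymbol a;\boldsymbol p;z)$, $q(\boldsymbol a;\boldsymbol p;z)$ be the unique rational functions of $(\alpha,\beta,\gamma,z)$ with ${}_2F_1(\boldsymbol a+\boldsymbol p;z)=r(\boldsymbol a;\boldsymbol p;z)\,{}_2F_1(\boldsymbol a;z)+q(\boldsymbol a;\boldsymbol p;z)\,{}_2F_1(\boldsymbol a+\boldsymbol 1;z)$ (obtained from Gauss's contiguous relations). Set $A(\boldsymbol a;\boldsymbol p):=\begin{pmatrix}r(\boldsymbol a;\boldsymbol p;z)&q(\boldsymbol a;\boldsymbol p;z)\\ r(\boldsymbol a;\boldsymbol p+\boldsymbol 1;z)&q(\boldsymbol a;\boldsymbol p+\boldsymbol 1;z)\end{pmatrix}$, so that $(F(\boldsymbol a+\boldsymbol p),F(\boldsymbol a+\boldsymbol p+\boldsymbol 1))^t=A(\boldsymbol a;\boldsymbol p)(F(\boldsymbol a),F(\boldsymbol a+\boldsymbol 1))^t$ with $F={}_2F_1(\cdot;z)$. $(\alpha)_k$ is the Pochhammer symbol. *)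

theory Defs
  imports "HOL-Analysis.Analysis" "HOL-Computational_Algebra.Polynomial"
begin

text \<open>Gauss hypergeometric series 2F1(a,b;c;z) (convergent for |z| < 1 when c is not a
  nonpositive integer).\<close>
definition hyp2f1 :: "complex \<Rightarrow> complex \<Rightarrow> complex \<Rightarrow> complex \<Rightarrow> complex" where
  "hyp2f1 a b c z = (\<Sum>n. pochhammer a n * pochhammer b n / (pochhammer c n * fact n) * z ^ n)"

definition poly_form ::
  "nat \<Rightarrow> complex poly \<Rightarrow> (complex \<Rightarrow> complex \<Rightarrow> complex \<Rightarrow> complex \<Rightarrow> complex) \<Rightarrow> bool" where
  "poly_form k D phi \<longleftrightarrow> D \<noteq> 0 \<and>
     (\<exists>N P. \<forall>\<alpha> \<beta> \<gamma> z. phi \<alpha> \<beta> \<gamma> z =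
        (\<Sum>i\<le>k. \<Sum>j\<le>k - i. \<Sum>l\<le>N. poly (P i j l) z * \<alpha> ^ i * \<gamma> ^ j * \<beta> ^ l) / poly D z)"

end

theory Submission
  imports Defs
begin

text \<open>
  Put \<open>V(\<alpha>, \<beta>, \<gamma>) = (\<gamma> F(\<alpha>, \<beta>, \<gamma>), F(\<alpha> + 1, \<beta> + 1, \<gamma> + 1))\<close>.
  Gauss's contiguous relations, checked coefficientwise on the power series, give the
  one-step recurrences
  \<open>z (\<gamma> - \<alpha>) (\<gamma> - \<beta>) V(\<alpha>, \<beta>, \<gamma> + 1) = (\<gamma> + 1) S V(\<alpha>, \<beta>, \<gamma>)\<close> and
  \<open>z (\<alpha> + 1) (\<gamma> - \<beta>) V(\<alpha> + 1, \<beta>, \<gamma> + 1) = (\<gamma> + 1) T V(\<alpha>, \<beta>, \<gamma>)\<close>,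
  where the entries of the \<open>2 \<times> 2\<close> matrices \<open>S\<close>, \<open>T\<close> are polynomials of degree at most 1
  in \<open>(\<alpha>, \<gamma>)\<close> (degree 0 below the diagonal), and \<open>det S = z (z - 1) (\<gamma> - \<alpha>) (\<gamma> - \<beta>)\<close>,
  \<open>det T = z (\<alpha> + 1) (\<gamma> - \<beta>)\<close>. Performing \<open>r - p\<close> \<open>\<gamma>\<close>-steps followed by \<open>p\<close>
  \<open>(\<alpha>, \<gamma>)\<close>-steps expresses \<open>V(\<alpha> + p, \<beta>, \<gamma> + r)\<close> through \<open>V(\<alpha>, \<beta>, \<gamma>)\<close> by the
  ordered product of the step matrices, whose entries have degree at most \<open>r\<close>
  (\<open>r - 1\<close> below the diagonal) and whose determinant is the product of the step
  determinants. The last step raises \<open>\<alpha>\<close>, so the first row carries the factor \<open>\<alpha> + p\<close>;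
  dividing it out lowers the degree of that row to \<open>r - 1\<close>. The denominators are
  the products of the scalar factors of the steps.
\<close>

section \<open>Convergence of the hypergeometric series\<close>

definition hyp2f1_coeff :: "complex \<Rightarrow> complex \<Rightarrow> complex \<Rightarrow> nat \<Rightarrow> complex" where
  "hyp2f1_coeff a b c n = pochhammer a n * pochhammer b n / (pochhammer c n * fact n)"

lemma hyp2f1_eq_suminf: "hyp2f1 a b c z = (\<Sum>n. hyp2f1_coeff a b c n * z ^ n)"
  by (simp add: hyp2f1_def hyp2f1_coeff_def)

lemma hyp2f1_coeff_Suc:
  "hyp2f1_coeff a b c (Suc n) =
     hyp2f1_coeff a b c n * ((a + of_nat n) * (b + of_nat n) / ((c + of_nat n) * of_nat (Suc n)))"
  unfolding hyp2f1_coeff_def by (simp add: pochhammer_Suc field_simps del: of_nat_Suc)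

lemma nonpos_Ints_add_of_nat:
  "(c::complex) \<notin> \<int>\<^sub>\<le>\<^sub>0 \<Longrightarrow> c + of_nat k \<notin> \<int>\<^sub>\<le>\<^sub>0"
  using nonpos_Ints_diff_Nats[of "c + of_nat k" "of_nat k"] by auto

lemma tendsto_ratio_add_of_nat: "(\<lambda>n. (x + of_nat n) / (y + of_nat n)) \<longlonglongrightarrow> (1::complex)"
proof -
  have "(\<lambda>n. (x / of_nat n + 1) / (y / of_nat n + 1)) \<longlonglongrightarrow> (0 + 1) / (0 + 1)"
    by (intro tendsto_intros) auto
  moreover have "\<forall>\<^sub>F n in sequentially.
      (x / of_nat n + 1) / (y / of_nat n + 1) = (x + of_nat n) / (y + of_nat n)"
    using eventually_gt_at_top[of 0] by eventually_elim (simp add: divide_simps)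
  ultimately show ?thesis
    using Lim_transform_eventually by fastforce
qed

lemma sums_hyp2f1:
  assumes "c \<notin> \<int>\<^sub>\<le>\<^sub>0" "norm z < 1"
  shows "(\<lambda>n. hyp2f1_coeff a b c n * z ^ n) sums hyp2f1 a b c z"
  unfolding hyp2f1_eq_suminf
proof (rule summable_sums)
  define q where "q n = (a + of_nat n) * (b + of_nat n) / ((c + of_nat n) * of_nat (Suc n)) * z" for n
  define \<rho> where "\<rho> = (1 + norm z) / 2"
  have "(\<lambda>n. (a + of_nat n) / (1 + of_nat n) * ((b + of_nat n) / (c + of_nat n)) * z)
      \<longlonglongrightarrow> 1 * 1 * z"
    by (intro tendsto_intros tendsto_ratio_add_of_nat)
  then have "(\<lambda>n. norm (q n)) \<longlonglongrightarrow> norm z"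
    unfolding q_def by (intro tendsto_norm) (simp add: field_simps)
  moreover have "norm z < \<rho>" "\<rho> < 1" using assms(2) by (simp_all add: \<rho>_def)
  ultimately obtain N where N: "\<And>n. n \<ge> N \<Longrightarrow> norm (q n) < \<rho>"
    by (metis (no_types, lifting) eventually_sequentially order_tendstoD(2))
  show "summable (\<lambda>n. hyp2f1_coeff a b c n * z ^ n)"
  proof (rule summable_ratio_test[of \<rho> N])
    fix n assume "n \<ge> N"
    have "hyp2f1_coeff a b c (Suc n) * z ^ Suc n = hyp2f1_coeff a b c n * z ^ n * q n"
      by (simp add: hyp2f1_coeff_Suc q_def)
    then have "norm (hyp2f1_coeff a b c (Suc n) * z ^ Suc n) = norm (hyp2f1_coeff a b c n * z ^ n) * norm (q n)"
      by (simp only: norm_mult)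
    also have "\<dots> \<le> \<rho> * norm (hyp2f1_coeff a b c n * z ^ n)"
      using N[OF \<open>n \<ge> N\<close>] by (simp add: mult.commute mult_right_mono)
    finally show "norm (hyp2f1_coeff a b c (Suc n) * z ^ Suc n) \<le> \<rho> * norm (hyp2f1_coeff a b c n * z ^ n)" .
  qed fact
qed

definition seq_shift :: "(nat \<Rightarrow> 'a::zero) \<Rightarrow> nat \<Rightarrow> 'a" where
  "seq_shift u n = (case n of 0 \<Rightarrow> 0 | Suc m \<Rightarrow> u m)"

lemma seq_shift_0 [simp]: "seq_shift u 0 = 0"
  and seq_shift_Suc [simp]: "seq_shift u (Suc n) = u n"
  by (simp_all add: seq_shift_def)

lemma sums_seq_shift:
  fixes z :: "'a::real_normed_field"
  assumes "(\<lambda>n. u n * z ^ n) sums s"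
  shows "(\<lambda>n. seq_shift u n * z ^ n) sums (z * s)"
proof -
  have "(\<lambda>n. seq_shift u (Suc n) * z ^ Suc n) sums (z * s)"
    using sums_mult[OF assms, of z] by (simp add: mult_ac)
  then show ?thesis by (subst (asm) sums_Suc_iff) simp
qed

lemma sums_coeff_relation:
  fixes z :: "'a::real_normed_field"
  assumes "(\<lambda>n. u n * z ^ n) sums U" "(\<lambda>n. v n * z ^ n) sums V" "(\<lambda>n. w n * z ^ n) sums W"
    and coeff: "\<And>n. L * w n = C * u n + D0 * v n + D1 * seq_shift v n"
  shows "L * W = C * U + (D0 + D1 * z) * V"
proof -
  have "(\<lambda>n. L * (w n * z ^ n)) sums (L * W)"
    by (intro sums_mult assms)
  moreover have "(\<lambda>n. L * (w n * z ^ n)) =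
      (\<lambda>n. C * (u n * z ^ n) + D0 * (v n * z ^ n) + D1 * (seq_shift v n * z ^ n))"
    by (simp add: fun_eq_iff mult.assoc[symmetric] coeff flip: distrib_right)
  moreover have "(\<lambda>n. C * (u n * z ^ n) + D0 * (v n * z ^ n) + D1 * (seq_shift v n * z ^ n)) sums
      (C * U + D0 * V + D1 * (z * V))"
    by (intro sums_add sums_mult sums_seq_shift assms)
  ultimately show ?thesis
    by (simp add: sums_unique2 algebra_simps)
qed

section \<open>Contiguous relations\<close>

lemma hyp2f1_coeff_denominators_nonzero:
  assumes "(c::complex) \<notin> \<int>\<^sub>\<le>\<^sub>0"
  shows "c \<noteq> 0" "c + 1 \<noteq> 0" "c + 1 + of_nat m \<noteq> 0" "1 + of_nat m \<noteq> (0::complex)"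
  using plus_of_nat_eq_0_imp[of c 0] plus_of_nat_eq_0_imp[of c 1] plus_of_nat_eq_0_imp[of c "Suc m"] assms
  by (auto simp: add_ac) (metis of_nat_Suc of_nat_neq_0)

(* Writing every coefficient through B turns the coefficient identities below into rational
   identities in a, b, c, m without dividing by a or b. *)
lemma hyp2f1_coeff_Suc_shifted:
  fixes a b c :: complex and m :: nat
  defines "B \<equiv> hyp2f1_coeff (a + 1) (b + 1) (c + 1) m"
  assumes c: "c \<notin> \<int>\<^sub>\<le>\<^sub>0"
  shows "hyp2f1_coeff a b c (Suc m) = a * b * B / (c * (1 + of_nat m))"
    and "hyp2f1_coeff a b (c + 1) (Suc m) = a * b * B / ((c + 1 + of_nat m) * (1 + of_nat m))"
    and "hyp2f1_coeff (a + 1) b (c + 1) (Suc m) = b * B * (a + 1 + of_nat m) / ((c + 1 + of_nat m) * (1 + of_nat m))"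
    and "hyp2f1_coeff (a + 1) (b + 1) (c + 1) (Suc m) =
      B * (a + 1 + of_nat m) * (b + 1 + of_nat m) / ((c + 1 + of_nat m) * (1 + of_nat m))"
    and "hyp2f1_coeff (a + 1) (b + 1) (c + 2) m = B * (c + 1) / (c + 1 + of_nat m)"
    and "(a + 1) * hyp2f1_coeff (a + 2) (b + 1) (c + 2) m = B * (a + 1 + of_nat m) * (c + 1) / (c + 1 + of_nat m)"
proof -
  have nz: "c \<noteq> 0" "c + 1 \<noteq> 0" "c + 1 + of_nat m \<noteq> 0" "pochhammer (c + 1) m \<noteq> 0"
    using hyp2f1_coeff_denominators_nonzero[OF c] pochhammer_eq_0_imp_nonpos_Int nonpos_Ints_add_of_nat[OF c, of 1]
    by auto
  have poch2: "(x + 1) * pochhammer (x + 2) m = pochhammer (x + 1) m * (x + 1 + of_nat m)" for x :: complex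
    using pochhammer_rec[of "x + 1" m] pochhammer_Suc[of "x + 1" m] by (simp add: add.assoc one_add_one)
  have fact_Suc_m: "(fact (Suc m) :: complex) = (1 + of_nat m) * fact m"
    by (simp add: fact_Suc)
  show "hyp2f1_coeff a b c (Suc m) = a * b * B / (c * (1 + of_nat m))"
    and "hyp2f1_coeff a b (c + 1) (Suc m) = a * b * B / ((c + 1 + of_nat m) * (1 + of_nat m))"
    and "hyp2f1_coeff (a + 1) b (c + 1) (Suc m) = b * B * (a + 1 + of_nat m) / ((c + 1 + of_nat m) * (1 + of_nat m))"
    and "hyp2f1_coeff (a + 1) (b + 1) (c + 1) (Suc m) =
      B * (a + 1 + of_nat m) * (b + 1 + of_nat m) / ((c + 1 + of_nat m) * (1 + of_nat m))"
    unfolding hyp2f1_coeff_def B_def pochhammer_rec[of a] pochhammer_rec[of b] pochhammer_rec[of c]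
      pochhammer_Suc[of "a + 1"] pochhammer_Suc[of "b + 1"] pochhammer_Suc[of "c + 1"] fact_Suc_m
    using nz by (simp_all add: field_simps)
  have c2: "pochhammer (c + 2) m = pochhammer (c + 1) m * (c + 1 + of_nat m) / (c + 1)"
    using poch2[of c] nz by (simp add: field_simps)
  show "hyp2f1_coeff (a + 1) (b + 1) (c + 2) m = B * (c + 1) / (c + 1 + of_nat m)"
    unfolding hyp2f1_coeff_def B_def c2 using nz by (simp add: field_simps)
  show "(a + 1) * hyp2f1_coeff (a + 2) (b + 1) (c + 2) m = B * (a + 1 + of_nat m) * (c + 1) / (c + 1 + of_nat m)"
    unfolding hyp2f1_coeff_def B_def c2 mult.assoc[symmetric] times_divide_eq_right poch2 using nz
    by (simp add: field_simps)
qed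

(* The suffix lists the raised parameters: aabcc stands for (a + 2, b + 1, c + 2). *)
lemma hyp2f1_contiguous_c:
  assumes c: "c \<notin> \<int>\<^sub>\<le>\<^sub>0" and z: "norm z < 1"
  shows "(c - a) * (c - b) * hyp2f1 a b (c + 1) z =
    c * (c - a - b) * hyp2f1 a b c z + a * b * (1 - z) * hyp2f1 (a + 1) (b + 1) (c + 1) z"
proof -
  have c1: "c + 1 \<notin> \<int>\<^sub>\<le>\<^sub>0"
    using nonpos_Ints_add_of_nat[OF c, of 1] by simp
  have "(c - a) * (c - b) * hyp2f1_coeff a b (c + 1) n =
      c * (c - a - b) * hyp2f1_coeff a b c n + a * b * hyp2f1_coeff (a + 1) (b + 1) (c + 1) n
      + (- a * b) * seq_shift (hyp2f1_coeff (a + 1) (b + 1) (c + 1)) n" for n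
  proof (cases n)
    case (Suc m)
    show ?thesis
      unfolding Suc seq_shift_Suc hyp2f1_coeff_Suc_shifted[where a = a and b = b, OF c]
      using hyp2f1_coeff_denominators_nonzero[OF c] by (simp add: divide_simps) (simp add: algebra_simps)
  qed (simp add: hyp2f1_coeff_def algebra_simps)
  from sums_coeff_relation[OF sums_hyp2f1[OF c z] sums_hyp2f1[OF c1 z] sums_hyp2f1[OF c1 z] this]
  show ?thesis
    by (simp add: algebra_simps)
qed

lemma hyp2f1_contiguous_abcc:
  assumes c: "c \<notin> \<int>\<^sub>\<le>\<^sub>0" and z: "norm z < 1"
  shows "(c - a) * (c - b) * z * hyp2f1 (a + 1) (b + 1) (c + 2) z =
    c * (c + 1) * hyp2f1 a b c z - c * (c + 1) * (1 - z) * hyp2f1 (a + 1) (b + 1) (c + 1) z"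
proof -
  have c1: "c + 1 \<notin> \<int>\<^sub>\<le>\<^sub>0" and c2: "c + 2 \<notin> \<int>\<^sub>\<le>\<^sub>0"
    using nonpos_Ints_add_of_nat[OF c, of 1] nonpos_Ints_add_of_nat[OF c, of 2] by simp_all
  have "(c - a) * (c - b) * seq_shift (hyp2f1_coeff (a + 1) (b + 1) (c + 2)) n =
      c * (c + 1) * hyp2f1_coeff a b c n + (- c * (c + 1)) * hyp2f1_coeff (a + 1) (b + 1) (c + 1) n
      + c * (c + 1) * seq_shift (hyp2f1_coeff (a + 1) (b + 1) (c + 1)) n" for n
  proof (cases n)
    case (Suc m)
    show ?thesis
      unfolding Suc seq_shift_Suc hyp2f1_coeff_Suc_shifted[where a = a and b = b, OF c]
      using hyp2f1_coeff_denominators_nonzero[OF c] by (simp add: divide_simps) (simp add: algebra_simps)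
  qed (simp add: hyp2f1_coeff_def algebra_simps)
  from sums_coeff_relation[OF sums_hyp2f1[OF c z] sums_hyp2f1[OF c1 z]
      sums_seq_shift[OF sums_hyp2f1[OF c2 z]] this]
  show ?thesis
    by (simp add: algebra_simps)
qed

lemma hyp2f1_contiguous_ac:
  assumes c: "c \<notin> \<int>\<^sub>\<le>\<^sub>0" and z: "norm z < 1"
  shows "(c - b) * hyp2f1 (a + 1) b (c + 1) z =
    c * hyp2f1 a b c z - b * (1 - z) * hyp2f1 (a + 1) (b + 1) (c + 1) z"
proof -
  have c1: "c + 1 \<notin> \<int>\<^sub>\<le>\<^sub>0"
    using nonpos_Ints_add_of_nat[OF c, of 1] by simp
  have "(c - b) * hyp2f1_coeff (a + 1) b (c + 1) n =
      c * hyp2f1_coeff a b c n + (- b) * hyp2f1_coeff (a + 1) (b + 1) (c + 1) n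
      + b * seq_shift (hyp2f1_coeff (a + 1) (b + 1) (c + 1)) n" for n
  proof (cases n)
    case (Suc m)
    show ?thesis
      unfolding Suc seq_shift_Suc hyp2f1_coeff_Suc_shifted[where a = a and b = b, OF c]
      using hyp2f1_coeff_denominators_nonzero[OF c] by (simp add: divide_simps) (simp add: algebra_simps)
  qed (simp add: hyp2f1_coeff_def algebra_simps)
  from sums_coeff_relation[OF sums_hyp2f1[OF c z] sums_hyp2f1[OF c1 z] sums_hyp2f1[OF c1 z] this]
  show ?thesis
    by (simp add: algebra_simps)
qed

lemma hyp2f1_contiguous_aabcc:
  assumes c: "c \<notin> \<int>\<^sub>\<le>\<^sub>0" and z: "norm z < 1"
  shows "(a + 1) * (c - b) * z * hyp2f1 (a + 2) (b + 1) (c + 2) z =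
    (c + 1) * (c - b * z) * hyp2f1 (a + 1) (b + 1) (c + 1) z - c * (c + 1) * hyp2f1 a b c z"
proof -
  have c1: "c + 1 \<notin> \<int>\<^sub>\<le>\<^sub>0" and c2: "c + 2 \<notin> \<int>\<^sub>\<le>\<^sub>0"
    using nonpos_Ints_add_of_nat[OF c, of 1] nonpos_Ints_add_of_nat[OF c, of 2] by simp_all
  have coeff: "(c - b) * seq_shift (\<lambda>n. (a + 1) * hyp2f1_coeff (a + 2) (b + 1) (c + 2) n) n =
      (- c * (c + 1)) * hyp2f1_coeff a b c n + c * (c + 1) * hyp2f1_coeff (a + 1) (b + 1) (c + 1) n
      + (- (c + 1) * b) * seq_shift (hyp2f1_coeff (a + 1) (b + 1) (c + 1)) n" for n
  proof (cases n)
    case (Suc m)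
    show ?thesis
      unfolding Suc seq_shift_Suc hyp2f1_coeff_Suc_shifted[where a = a and b = b, OF c]
      using hyp2f1_coeff_denominators_nonzero[OF c] by (simp add: divide_simps) (simp add: algebra_simps)
  qed (simp add: hyp2f1_coeff_def algebra_simps)
  have "(\<lambda>n. (a + 1) * hyp2f1_coeff (a + 2) (b + 1) (c + 2) n * z ^ n) sums
      ((a + 1) * hyp2f1 (a + 2) (b + 1) (c + 2) z)"
    using sums_mult[OF sums_hyp2f1[OF c2 z], of "a + 1"] by (simp add: mult.assoc)
  from sums_coeff_relation[OF sums_hyp2f1[OF c z] sums_hyp2f1[OF c1 z] sums_seq_shift[OF this] coeff]
  show ?thesis
    by (simp add: algebra_simps)
qed

section \<open>Iterating the contiguity steps\<close>

primrec mat_iter_prod :: "(nat \<Rightarrow> 'a::semiring_1^'n^'n) \<Rightarrow> nat \<Rightarrow> 'a^'n^'n" where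
  "mat_iter_prod M 0 = mat 1"
| "mat_iter_prod M (Suc n) = M n ** mat_iter_prod M n"

lemma mat_iter_prod_recurrence:
  fixes x :: "nat \<Rightarrow> 'a::field^'n"
  assumes step: "\<And>k. k < n \<Longrightarrow> d k *s x (Suc k) = e k *s (M k *v x k)"
  shows "(\<Prod>k<n. d k) *s x n = (\<Prod>k<n. e k) *s (mat_iter_prod M n *v x 0)"
  using step
proof (induction n)
  case (Suc n)
  have "(\<Prod>k<Suc n. d k) *s x (Suc n) = (\<Prod>k<n. d k) *s (d n *s x (Suc n))"
    by (simp add: vector_smult_assoc mult.commute)
  also have "\<dots> = e n *s (M n *v ((\<Prod>k<n. d k) *s x n))"
    by (simp add: Suc.prems vector_smult_assoc vector_scalar_commute mult.commute)
  also have "\<dots> = (\<Prod>k<Suc n. e k) *s (mat_iter_prod M (Suc n) *v x 0)"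
    by (simp add: Suc vector_smult_assoc vector_scalar_commute matrix_vector_mul_assoc mult.commute)
  finally show ?case .
qed simp

definition hyp2f1_pair :: "complex \<Rightarrow> complex \<Rightarrow> complex \<Rightarrow> complex \<Rightarrow> complex^2" where
  "hyp2f1_pair a b c z = vector [c * hyp2f1 a b c z, hyp2f1 (a + 1) (b + 1) (c + 1) z]"

definition raise_c_mat :: "complex \<Rightarrow> complex \<Rightarrow> complex \<Rightarrow> complex \<Rightarrow> complex^2^2" where
  "raise_c_mat a b c z = vector [vector [z * (c - a - b), z * (1 - z) * a * b], vector [1, - c * (1 - z)]]"

definition raise_ac_mat :: "complex \<Rightarrow> complex \<Rightarrow> complex \<Rightarrow> complex \<Rightarrow> complex^2^2" where
  "raise_ac_mat a b c z = vector [vector [z * (a + 1), z * b * (z - 1) * (a + 1)], vector [-1, c - b * z]]"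

lemma mat2_mult_vec2:
  "(vector [vector [p, q], vector [r, s]] :: 'a::comm_semiring_1^2^2) *v vector [x, y] =
     vector [p * x + q * y, r * x + s * y]"
  by (simp add: vec_eq_iff forall_2 matrix_vector_mult_def sum_2)

lemma hyp2f1_pair_raise_c:
  assumes "c \<notin> \<int>\<^sub>\<le>\<^sub>0" "norm z < 1"
  shows "(z * ((c - a) * (c - b))) *s hyp2f1_pair a b (c + 1) z =
    (c + 1) *s (raise_c_mat a b c z *v hyp2f1_pair a b c z)"
  using hyp2f1_contiguous_c[OF assms, of a b] hyp2f1_contiguous_abcc[OF assms, of a b]
  unfolding hyp2f1_pair_def raise_c_mat_def mat2_mult_vec2
  by (simp add: vec_eq_iff forall_2 add.assoc one_add_one) algebra

lemma hyp2f1_pair_raise_ac: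
  assumes "c \<notin> \<int>\<^sub>\<le>\<^sub>0" "norm z < 1"
  shows "(z * ((a + 1) * (c - b))) *s hyp2f1_pair (a + 1) b (c + 1) z =
    (c + 1) *s (raise_ac_mat a b c z *v hyp2f1_pair a b c z)"
  using hyp2f1_contiguous_ac[OF assms, of b a] hyp2f1_contiguous_aabcc[OF assms, of a b]
  unfolding hyp2f1_pair_def raise_ac_mat_def mat2_mult_vec2
  by (simp add: vec_eq_iff forall_2 add.assoc one_add_one) algebra

definition step_mat :: "nat \<Rightarrow> complex \<Rightarrow> complex \<Rightarrow> complex \<Rightarrow> complex \<Rightarrow> nat \<Rightarrow> complex^2^2" where
  "step_mat m a b c z k =
     (if k < m then raise_c_mat a b (c + of_nat k) z
      else raise_ac_mat (a + of_nat (k - m)) b (c + of_nat k) z)"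

definition step_den :: "nat \<Rightarrow> complex \<Rightarrow> complex \<Rightarrow> complex \<Rightarrow> nat \<Rightarrow> complex" where
  "step_den m a b c k =
     (if k < m then (c + of_nat k - a) * (c + of_nat k - b)
      else (a + of_nat (k - m) + 1) * (c + of_nat k - b))"

lemma hyp2f1_pair_step:
  assumes "c \<notin> \<int>\<^sub>\<le>\<^sub>0" "norm z < 1"
  shows "(z * step_den m a b c k) *s hyp2f1_pair (a + of_nat (Suc k - m)) b (c + of_nat (Suc k)) z =
    (c + of_nat k + 1) *s (step_mat m a b c z k *v hyp2f1_pair (a + of_nat (k - m)) b (c + of_nat k) z)"
proof (cases "k < m")
  case True
  then show ?thesis
    using hyp2f1_pair_raise_c[OF nonpos_Ints_add_of_nat[OF assms(1), of k] assms(2), of a b]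
    by (simp add: step_den_def step_mat_def add_ac)
next
  case False
  then have "Suc k - m = Suc (k - m)" by simp
  with False show ?thesis
    using hyp2f1_pair_raise_ac[OF nonpos_Ints_add_of_nat[OF assms(1), of k] assms(2), of "a + of_nat (k - m)" b]
    by (simp add: step_den_def step_mat_def add_ac)
qed

lemma hyp2f1_pair_transfer:
  assumes "c \<notin> \<int>\<^sub>\<le>\<^sub>0" "norm z < 1"
  shows "(z ^ n * (\<Prod>k<n. step_den m a b c k)) *s hyp2f1_pair (a + of_nat (n - m)) b (c + of_nat n) z =
    pochhammer (c + 1) n *s (mat_iter_prod (step_mat m a b c z) n *v hyp2f1_pair a b c z)"
  using mat_iter_prod_recurrence[where x = "\<lambda>k. hyp2f1_pair (a + of_nat (k - m)) b (c + of_nat k) z",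
      OF hyp2f1_pair_step[OF assms]]
  by (simp add: prod.distrib pochhammer_prod atLeast0LessThan add_ac)

lemma prod_step_den:
  "(\<Prod>k<n. step_den m a b c k) =
     pochhammer (c - a) (min n m) * pochhammer (c - b) n * pochhammer (a + 1) (n - m)"
proof (induction n)
  case (Suc n)
  then show ?case
    by (cases "n < m") (auto simp: step_den_def pochhammer_Suc Suc_diff_le min_def algebra_simps)
qed simp

lemma det_mat_iter_prod_step_mat:
  "det (mat_iter_prod (step_mat m a b c z) n) = z ^ n * (z - 1) ^ min n m * (\<Prod>k<n. step_den m a b c k)"
proof (induction n)
  case (Suc n)
  have "det (step_mat m a b c z n) = z * (z - 1) ^ (if n < m then 1 else 0) * step_den m a b c n"
    by (simp add: step_mat_def step_den_def raise_c_mat_def raise_ac_mat_def det_2 algebra_simps)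
  moreover have "min (Suc n) m = min n m + (if n < m then 1 else 0)"
    by auto
  ultimately show ?case
    by (simp add: det_mul Suc.IH power_add algebra_simps)
qed simp

section \<open>Degrees in \<open>(\<alpha>, \<gamma>)\<close>\<close>

inductive ag_degree_le :: "nat \<Rightarrow> (complex \<Rightarrow> complex \<Rightarrow> complex \<Rightarrow> complex \<Rightarrow> complex) \<Rightarrow> bool" where
  monomial: "i + j \<le> k \<Longrightarrow> ag_degree_le k (\<lambda>a b c z. poly q z * a ^ i * c ^ j * b ^ l)"
| add: "ag_degree_le k f \<Longrightarrow> ag_degree_le k g \<Longrightarrow> ag_degree_le k (\<lambda>a b c z. f a b c z + g a b c z)"

lemma ag_degree_le_mult:
  assumes "ag_degree_le i f" "ag_degree_le j g" "i + j \<le> k"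
  shows "ag_degree_le k (\<lambda>a b c z. f a b c z * g a b c z)"
  using assms
proof (induction arbitrary: k rule: ag_degree_le.induct)
  case (monomial i1 j1 i q l)
  note deg1 = monomial.hyps
  from monomial.prems show ?case
  proof (induction arbitrary: k rule: ag_degree_le.induct)
    case (monomial i2 j2 j q' l')
    then have "ag_degree_le k (\<lambda>a b c z. poly (q * q') z * a ^ (i1 + i2) * c ^ (j1 + j2) * b ^ (l + l'))"
      using deg1 monomial.hyps by (intro ag_degree_le.monomial) simp
    then show ?case
      by (simp add: power_add mult_ac)
  next
    case (add j f g)
    then show ?case
      using ag_degree_le.add[OF add.IH] by (simp add: distrib_left)
  qed
next
  case (add i f g)
  then show ?case
    using ag_degree_le.add[OF add.IH] by (simp add: distrib_right)
qed

lemma ag_degree_le_const: "ag_degree_le k (\<lambda>a b c z. x)"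
  using ag_degree_le.monomial[of 0 0 k "[:x:]" 0] by simp

lemma ag_degree_le_z: "ag_degree_le k (\<lambda>a b c z. z)"
  using ag_degree_le.monomial[of 0 0 k "[:0, 1:]" 0] by simp

lemma ag_degree_le_b: "ag_degree_le k (\<lambda>a b c z. b)"
  using ag_degree_le.monomial[of 0 0 k 1 1] by simp

lemma ag_degree_le_a: "ag_degree_le (Suc k) (\<lambda>a b c z. a)"
  using ag_degree_le.monomial[of 1 0 "Suc k" 1 0] by simp

lemma ag_degree_le_c: "ag_degree_le (Suc k) (\<lambda>a b c z. c)"
  using ag_degree_le.monomial[of 0 1 "Suc k" 1 0] by simp

lemma ag_degree_le_uminus:
  assumes "ag_degree_le k f"
  shows "ag_degree_le k (\<lambda>a b c z. - f a b c z)"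
proof -
  have "ag_degree_le k (\<lambda>a b c z. (- 1) * f a b c z)"
    using ag_degree_le_const[of 0] assms by (rule ag_degree_le_mult) simp
  then show ?thesis by simp
qed

lemma ag_degree_le_diff:
  assumes "ag_degree_le k f" "ag_degree_le k g"
  shows "ag_degree_le k (\<lambda>a b c z. f a b c z - g a b c z)"
  using ag_degree_le.add[OF assms(1) ag_degree_le_uminus[OF assms(2)]] by simp

lemma ag_degree_le_mult0:
  "ag_degree_le 0 f \<Longrightarrow> ag_degree_le k g \<Longrightarrow> ag_degree_le k (\<lambda>a b c z. f a b c z * g a b c z)"
  "ag_degree_le k f \<Longrightarrow> ag_degree_le 0 g \<Longrightarrow> ag_degree_le k (\<lambda>a b c z. f a b c z * g a b c z)"
  by (simp_all add: ag_degree_le_mult)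

lemmas ag_degree_le_intros = ag_degree_le.add ag_degree_le_diff ag_degree_le_uminus ag_degree_le_mult0
  ag_degree_le_const ag_degree_le_z ag_degree_le_b ag_degree_le_a ag_degree_le_c

lemma ag_degree_le_step_mat:
  "ag_degree_le 1 (\<lambda>a b c z. step_mat m a b c z k $ i $ j)"
  by (insert exhaust_2[of i] exhaust_2[of j], cases "k < m";
      auto simp: step_mat_def raise_c_mat_def raise_ac_mat_def; (rule ag_degree_le_intros)+)

lemma ag_degree_le_step_mat_21:
  "ag_degree_le 0 (\<lambda>a b c z. step_mat m a b c z k $ 2 $ 1)"
  by (cases "k < m") (simp_all add: step_mat_def raise_c_mat_def raise_ac_mat_def ag_degree_le_const)

lemma mat2_mult_nth:
  "((A::'a::semiring_1^2^2) ** B) $ i $ j = A $ i $ 1 * B $ 1 $ j + A $ i $ 2 * B $ 2 $ j"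
  by (simp add: matrix_matrix_mult_def sum_2)

lemma ag_degree_le_mat_iter_prod_step_mat:
  "ag_degree_le n (\<lambda>a b c z. mat_iter_prod (step_mat m a b c z) n $ i $ j) \<and>
   ag_degree_le (n - 1) (\<lambda>a b c z. mat_iter_prod (step_mat m a b c z) n $ 2 $ 1)"
proof (induction n arbitrary: i j)
  case 0
  show ?case
    by (simp add: mat_def ag_degree_le_const)
next
  case (Suc n)
  have "ag_degree_le (Suc n)
      (\<lambda>a b c z. step_mat m a b c z n $ i $ k * mat_iter_prod (step_mat m a b c z) n $ k $ j)" for i k j
    using ag_degree_le_step_mat Suc.IH by (rule ag_degree_le_mult[OF _ conjunct1]) simp
  moreover have "ag_degree_le n
      (\<lambda>a b c z. step_mat m a b c z n $ 2 $ 2 * mat_iter_prod (step_mat m a b c z) n $ 2 $ 1)"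
  proof (cases "n = 0")
    case True
    then show ?thesis by (simp add: mat_def ag_degree_le_const)
  next
    case False
    from ag_degree_le_step_mat Suc.IH show ?thesis
      by (rule ag_degree_le_mult[OF _ conjunct2]) (use False in simp)
  qed
  moreover have "ag_degree_le n
      (\<lambda>a b c z. step_mat m a b c z n $ 2 $ 1 * mat_iter_prod (step_mat m a b c z) n $ 1 $ 1)"
    using ag_degree_le_step_mat_21 Suc.IH by (rule ag_degree_le_mult[OF _ conjunct1]) simp
  ultimately show ?case
    by (simp add: mat2_mult_nth ag_degree_le.add)
qed

lemma sum_triangle_delta:
  fixes T :: "nat \<Rightarrow> nat \<Rightarrow> nat \<Rightarrow> 'a::comm_monoid_add"
  assumes "i0 + j0 \<le> k" "l0 \<le> N"
  shows "(\<Sum>i\<le>k. \<Sum>j\<le>k - i. \<Sum>l\<le>N.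
      if i = i0 then if j = j0 then if l = l0 then T i j l else 0 else 0 else 0) = T i0 j0 l0"
proof -
  have pull: "(\<Sum>x\<in>A. if P then f x else 0) = (if P then \<Sum>x\<in>A. f x else 0)" for P A and f :: "nat \<Rightarrow> 'a"
    by simp
  from assms have "j0 \<le> k - i0"
    by simp
  with assms show ?thesis
    by (simp add: pull sum.delta)
qed

definition ag_coeff_sum ::
    "nat \<Rightarrow> nat \<Rightarrow> (nat \<Rightarrow> nat \<Rightarrow> nat \<Rightarrow> complex poly) \<Rightarrow> complex \<Rightarrow> complex \<Rightarrow> complex \<Rightarrow> complex \<Rightarrow> complex"
  where "ag_coeff_sum k N P a b c z =
    (\<Sum>i\<le>k. \<Sum>j\<le>k - i. \<Sum>l\<le>N. poly (P i j l) z * a ^ i * c ^ j * b ^ l)"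

(* Every large enough bound N on the degree in b works, so that two representations
   can be added with a common N. *)
lemma ag_degree_le_coeffs:
  assumes "ag_degree_le k f"
  shows "\<exists>N0. \<forall>N\<ge>N0. \<exists>P. \<forall>a b c z. f a b c z = ag_coeff_sum k N P a b c z"
  using assms
proof (induction rule: ag_degree_le.induct)
  case (monomial i0 j0 k q l0)
  show ?case
  proof (intro exI allI impI)
    fix N a b c z assume "l0 \<le> N"
    define P where "P i j l = (if i = i0 then if j = j0 then if l = l0 then q else 0 else 0 else 0)" for i j l
    have "ag_coeff_sum k N P a b c z =
        (\<Sum>i\<le>k. \<Sum>j\<le>k - i. \<Sum>l\<le>N. if i = i0 then if j = j0 then if l = l0
          then poly q z * a ^ i * c ^ j * b ^ l else 0 else 0 else 0)"
      unfolding ag_coeff_sum_def by (intro sum.cong refl) (simp add: P_def)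
    also have "\<dots> = poly q z * a ^ i0 * c ^ j0 * b ^ l0"
      using monomial \<open>l0 \<le> N\<close> by (rule sum_triangle_delta)
    finally show "poly q z * a ^ i0 * c ^ j0 * b ^ l0 = ag_coeff_sum k N P a b c z"
      by simp
  qed
next
  case (add k f g)
  then obtain N1 N2 where f: "\<forall>N\<ge>N1. \<exists>P. \<forall>a b c z. f a b c z = ag_coeff_sum k N P a b c z"
    and g: "\<forall>N\<ge>N2. \<exists>Q. \<forall>a b c z. g a b c z = ag_coeff_sum k N Q a b c z"
    by blast
  show ?case
  proof (rule exI[of _ "max N1 N2"], intro allI impI)
    fix N assume N: "max N1 N2 \<le> N"
    obtain P Q where "\<And>a b c z. f a b c z = ag_coeff_sum k N P a b c z"
      and "\<And>a b c z. g a b c z = ag_coeff_sum k N Q a b c z"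
      using f g N by (meson max.bounded_iff)
    then show "\<exists>R. \<forall>a b c z. f a b c z + g a b c z = ag_coeff_sum k N R a b c z"
      by (intro exI[of _ "\<lambda>i j l. P i j l + Q i j l"]) (simp add: ag_coeff_sum_def distrib_right sum.distrib)
  qed
qed

lemma ag_degree_le_poly_form:
  assumes "ag_degree_le k f"
  shows "poly_form k (monom 1 r) (\<lambda>a b c z. f a b c z / z ^ r)"
proof -
  from ag_degree_le_coeffs[OF assms] obtain P N where "\<And>a b c z. f a b c z = ag_coeff_sum k N P a b c z"
    by blast
  then show ?thesis
    unfolding poly_form_def ag_coeff_sum_def by (auto simp: poly_monom)
qed

section \<open>The contiguity matrix for \<open>(p, 0, r)\<close>\<close>

(* z ^ r times the matrix of the \<phi>'s: the product of all r steps with the factor a + p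
   of the last step removed from its first row. *)
definition contiguity_num :: "nat \<Rightarrow> nat \<Rightarrow> complex \<Rightarrow> complex \<Rightarrow> complex \<Rightarrow> complex \<Rightarrow> complex^2^2" where
  "contiguity_num p r a b c z =
     vector [vector [z, z * b * (z - 1)] v* mat_iter_prod (step_mat (r - p) a b c z) (r - 1),
             mat_iter_prod (step_mat (r - p) a b c z) r $ 2]"

lemma mat_iter_prod_step_mat_row1:
  assumes "1 \<le> p" "p \<le> r"
  shows "mat_iter_prod (step_mat (r - p) a b c z) r $ 1 $ j = (a + of_nat p) * contiguity_num p r a b c z $ 1 $ j"
proof -
  have "Suc (r - 1) = r"
    using assms by simp
  then have "mat_iter_prod (step_mat (r - p) a b c z) r =
      step_mat (r - p) a b c z (r - 1) ** mat_iter_prod (step_mat (r - p) a b c z) (r - 1)"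
    by (metis mat_iter_prod.simps(2))
  moreover have "step_mat (r - p) a b c z (r - 1) =
      vector [vector [z * (a + of_nat p), z * b * (z - 1) * (a + of_nat p)], vector [-1, c + of_nat (r - 1) - b * z]]"
  proof -
    have "\<not> r - 1 < r - p" "r - 1 - (r - p) = p - 1" "of_nat (p - 1) + 1 = (of_nat p :: complex)"
      using assms by (auto simp: of_nat_diff)
    then show ?thesis
      by (simp add: step_mat_def raise_ac_mat_def add.assoc)
  qed
  ultimately show ?thesis
    by (simp add: mat2_mult_nth contiguity_num_def vector_matrix_mult_def sum_2 algebra_simps)
qed

lemma ag_degree_le_contiguity_num:
  "ag_degree_le (r - 1) (\<lambda>a b c z. contiguity_num p r a b c z $ 1 $ j)"
  "ag_degree_le (r - 1) (\<lambda>a b c z. contiguity_num p r a b c z $ 2 $ 1)"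
  "ag_degree_le r (\<lambda>a b c z. contiguity_num p r a b c z $ 2 $ 2)"
  using ag_degree_le_mat_iter_prod_step_mat[of r "r - p"]
  by (simp_all add: contiguity_num_def vector_matrix_mult_def sum_2)
    (rule ag_degree_le_intros conjunct1[OF ag_degree_le_mat_iter_prod_step_mat])+

lemma hyp2f1_contiguity_relations:
  fixes \<alpha> \<beta> \<gamma> z :: complex
  assumes p: "1 \<le> p" "p \<le> r" and \<gamma>: "\<gamma> \<notin> \<int>\<^sub>\<le>\<^sub>0" and z: "norm z < 1"
  defines "N \<equiv> contiguity_num p r \<alpha> \<beta> \<gamma> z"
    and "D \<equiv> pochhammer (\<gamma> - \<alpha>) (r - p) * pochhammer (\<gamma> - \<beta>) r * pochhammer (\<alpha> + 1) p"
    and "F \<equiv> hyp2f1 \<alpha> \<beta> \<gamma> z" and "G \<equiv> hyp2f1 (\<alpha> + 1) (\<beta> + 1) (\<gamma> + 1) z"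
  shows "z ^ r * D * (\<gamma> + of_nat r) * hyp2f1 (\<alpha> + of_nat p) \<beta> (\<gamma> + of_nat r) z =
      pochhammer (\<gamma> + 1) r * (\<alpha> + of_nat p) * (\<gamma> * N $ 1 $ 1 * F + N $ 1 $ 2 * G)"
    and "z ^ r * D * hyp2f1 (\<alpha> + of_nat p + 1) (\<beta> + 1) (\<gamma> + of_nat r + 1) z =
      pochhammer (\<gamma> + 1) r * (\<gamma> * N $ 2 $ 1 * F + N $ 2 $ 2 * G)"
    and "(\<alpha> + of_nat p) * (N $ 1 $ 1 * N $ 2 $ 2 - N $ 1 $ 2 * N $ 2 $ 1) = z ^ r * (z - 1) ^ (r - p) * D"
proof -
  define P where "P = mat_iter_prod (step_mat (r - p) \<alpha> \<beta> \<gamma> z) r"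
  have rows: "P $ 1 $ j = (\<alpha> + of_nat p) * N $ 1 $ j" "P $ 2 $ j = N $ 2 $ j" for j
    using mat_iter_prod_step_mat_row1[OF p] by (simp_all add: P_def N_def contiguity_num_def)
  have "min r (r - p) = r - p" "r - (r - p) = p"
    using p by auto
  then have den: "(\<Prod>k<r. step_den (r - p) \<alpha> \<beta> \<gamma> k) = D"
    by (simp add: prod_step_den D_def)
  have "(z ^ r * D) *s hyp2f1_pair (\<alpha> + of_nat p) \<beta> (\<gamma> + of_nat r) z =
      pochhammer (\<gamma> + 1) r *s (P *v hyp2f1_pair \<alpha> \<beta> \<gamma> z)"
    using hyp2f1_pair_transfer[OF \<gamma> z, of r "r - p" \<alpha> \<beta>] \<open>r - (r - p) = p\<close>
    by (simp add: den P_def)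
  then have "z ^ r * D * ((\<gamma> + of_nat r) * hyp2f1 (\<alpha> + of_nat p) \<beta> (\<gamma> + of_nat r) z) =
        pochhammer (\<gamma> + 1) r * (P $ 1 $ 1 * (\<gamma> * F) + P $ 1 $ 2 * G)"
      "z ^ r * D * hyp2f1 (\<alpha> + of_nat p + 1) (\<beta> + 1) (\<gamma> + of_nat r + 1) z =
        pochhammer (\<gamma> + 1) r * (P $ 2 $ 1 * (\<gamma> * F) + P $ 2 $ 2 * G)"
    by (simp_all add: vec_eq_iff forall_2 hyp2f1_pair_def matrix_vector_mult_def sum_2 F_def G_def add_ac)
  then show "z ^ r * D * (\<gamma> + of_nat r) * hyp2f1 (\<alpha> + of_nat p) \<beta> (\<gamma> + of_nat r) z =
      pochhammer (\<gamma> + 1) r * (\<alpha> + of_nat p) * (\<gamma> * N $ 1 $ 1 * F + N $ 1 $ 2 * G)"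
    and "z ^ r * D * hyp2f1 (\<alpha> + of_nat p + 1) (\<beta> + 1) (\<gamma> + of_nat r + 1) z =
      pochhammer (\<gamma> + 1) r * (\<gamma> * N $ 2 $ 1 * F + N $ 2 $ 2 * G)"
    by (simp_all add: rows algebra_simps)
  have "det P = z ^ r * (z - 1) ^ (r - p) * D"
    using det_mat_iter_prod_step_mat[of "r - p" \<alpha> \<beta> \<gamma> z r] \<open>min r (r - p) = r - p\<close>
    by (simp add: den P_def)
  then show "(\<alpha> + of_nat p) * (N $ 1 $ 1 * N $ 2 $ 2 - N $ 1 $ 2 * N $ 2 $ 1) = z ^ r * (z - 1) ^ (r - p) * D"
    by (simp add: det_2 rows algebra_simps)
qed

lemma pochhammer_rec_pred: "0 < n \<Longrightarrow> pochhammer a n = a * pochhammer (a + 1) (n - 1)"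
  using pochhammer_rec[of a "n - 1"] by simp

lemma pochhammer_plus_one_pred:
  fixes a :: "'a::comm_ring_1"
  shows "0 < n \<Longrightarrow> pochhammer (a + 1) n = pochhammer (a + 1) (n - 1) * (a + of_nat n)"
  using pochhammer_Suc[of "a + 1" "n - 1"] by (simp add: of_nat_diff algebra_simps)

lemma hyp2f1_contiguity_normalized:
  fixes \<alpha> \<beta> \<gamma> z :: complex
  assumes p: "1 \<le> p" "p \<le> r" and \<gamma>: "\<gamma> \<notin> \<int>\<^sub>\<le>\<^sub>0" and z: "0 < norm z" "norm z < 1"
    and nz: "pochhammer (\<gamma> - \<alpha>) (r - p) \<noteq> 0" "pochhammer (\<gamma> - \<beta>) r \<noteq> 0" "pochhammer (\<alpha> + 1) p \<noteq> 0"
  defines "\<phi> \<equiv> \<lambda>i j. contiguity_num p r \<alpha> \<beta> \<gamma> z $ i $ j / z ^ r"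
    and "s \<equiv> 1 / (pochhammer (\<gamma> - \<alpha>) (r - p) * pochhammer (\<gamma> - \<beta>) r)"
  defines "m11 \<equiv> s * (pochhammer \<gamma> r * \<phi> 1 1 / pochhammer (\<alpha> + 1) (p - 1))"
    and "m12 \<equiv> s * (pochhammer (\<gamma> + 1) (r - 1) * \<phi> 1 2 / pochhammer (\<alpha> + 1) (p - 1))"
    and "m21 \<equiv> s * (pochhammer \<gamma> (r + 1) * \<phi> 2 1 / pochhammer (\<alpha> + 1) p)"
    and "m22 \<equiv> s * (pochhammer (\<gamma> + 1) r * \<phi> 2 2 / pochhammer (\<alpha> + 1) p)"
  shows "hyp2f1 (\<alpha> + of_nat p) \<beta> (\<gamma> + of_nat r) z =
      m11 * hyp2f1 \<alpha> \<beta> \<gamma> z + m12 * hyp2f1 (\<alpha> + 1) (\<beta> + 1) (\<gamma> + 1) z"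
    and "hyp2f1 (\<alpha> + of_nat p + 1) (\<beta> + 1) (\<gamma> + of_nat r + 1) z =
      m21 * hyp2f1 \<alpha> \<beta> \<gamma> z + m22 * hyp2f1 (\<alpha> + 1) (\<beta> + 1) (\<gamma> + 1) z"
    and "m11 * m22 - m12 * m21 =
      (z - 1) ^ (r - p) * pochhammer \<gamma> r * pochhammer (\<gamma> + 1) r /
        (z ^ r * pochhammer (\<alpha> + 1) p * pochhammer (\<gamma> - \<alpha>) (r - p) * pochhammer (\<gamma> - \<beta>) r)"
proof -
  from z have "z \<noteq> 0"
    by auto
  define N where "N = contiguity_num p r \<alpha> \<beta> \<gamma> z"
  define A B C Q where "A = pochhammer (\<gamma> - \<alpha>) (r - p)" and "B = pochhammer (\<gamma> - \<beta>) r"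
    and "C = pochhammer (\<alpha> + 1) (p - 1)" and "Q = pochhammer (\<gamma> + 1) (r - 1)"
  define a' c' where "a' = \<alpha> + of_nat p" and "c' = \<gamma> + of_nat r"
  define F G H1 H2 where "F = hyp2f1 \<alpha> \<beta> \<gamma> z" and "G = hyp2f1 (\<alpha> + 1) (\<beta> + 1) (\<gamma> + 1) z"
    and "H1 = hyp2f1 a' \<beta> c' z" and "H2 = hyp2f1 (a' + 1) (\<beta> + 1) (c' + 1) z"
  have "0 < p" "0 < r"
    using p by simp_all
  have poch_a: "pochhammer (\<alpha> + 1) p = C * a'"
    unfolding C_def a'_def using \<open>0 < p\<close> by (rule pochhammer_plus_one_pred)
  have poch_c: "pochhammer \<gamma> r = \<gamma> * Q" "pochhammer (\<gamma> + 1) r = Q * c'"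
    unfolding Q_def c'_def using \<open>0 < r\<close> by (rule pochhammer_rec_pred pochhammer_plus_one_pred)+
  have "pochhammer \<gamma> (r + 1) = \<gamma> * Q * c'"
    using pochhammer_rec[of \<gamma> r] poch_c(2) by simp
  note poch = poch_a poch_c this
  have nz': "A \<noteq> 0" "B \<noteq> 0" "C \<noteq> 0" "a' \<noteq> 0" "c' \<noteq> 0"
    using nz poch(1) plus_of_nat_eq_0_imp[of \<gamma> r] \<gamma> by (auto simp: A_def B_def c'_def)
  define Z where "Z = z ^ r * A * B * C"
  have "Z \<noteq> 0"
    using \<open>z \<noteq> 0\<close> nz' by (simp add: Z_def)
  note rel = hyp2f1_contiguity_relations[OF p \<gamma> z(2), of \<alpha> \<beta>, folded N_def A_def B_def a'_def c'_def
      F_def G_def, unfolded poch, folded H1_def H2_def]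
  have "c' * a' * (Z * H1) = c' * a' * (Q * (\<gamma> * N $ 1 $ 1 * F + N $ 1 $ 2 * G))"
    using rel(1) by (simp only: Z_def ac_simps)
  then have "H1 = Q * (\<gamma> * N $ 1 $ 1 * F + N $ 1 $ 2 * G) / Z"
    using nz' \<open>Z \<noteq> 0\<close> by (simp add: eq_divide_eq mult.commute)
  moreover have "m11 * F + m12 * G = Q * (\<gamma> * N $ 1 $ 1 * F + N $ 1 $ 2 * G) / Z"
    using \<open>z \<noteq> 0\<close> nz' unfolding m11_def m12_def \<phi>_def s_def poch Z_def
      A_def[symmetric] B_def[symmetric] C_def[symmetric] Q_def[symmetric] N_def[symmetric]
    by (simp add: field_simps)
  ultimately show "hyp2f1 (\<alpha> + of_nat p) \<beta> (\<gamma> + of_nat r) z = m11 * F + m12 * G"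
    by (simp add: H1_def a'_def c'_def)
  have "Z * a' * H2 = Q * c' * (\<gamma> * N $ 2 $ 1 * F + N $ 2 $ 2 * G)"
    using rel(2) by (simp only: Z_def ac_simps)
  then have "H2 = Q * c' * (\<gamma> * N $ 2 $ 1 * F + N $ 2 $ 2 * G) / (Z * a')"
    using nz' \<open>Z \<noteq> 0\<close> by (simp add: eq_divide_eq mult.commute)
  moreover have "m21 * F + m22 * G = Q * c' * (\<gamma> * N $ 2 $ 1 * F + N $ 2 $ 2 * G) / (Z * a')"
    using \<open>z \<noteq> 0\<close> nz' unfolding m21_def m22_def \<phi>_def s_def poch Z_def
      A_def[symmetric] B_def[symmetric] C_def[symmetric] Q_def[symmetric] N_def[symmetric]
    by (simp add: field_simps)
  ultimately show "hyp2f1 (\<alpha> + of_nat p + 1) (\<beta> + 1) (\<gamma> + of_nat r + 1) z = m21 * F + m22 * G"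
    by (simp add: H2_def a'_def c'_def)
  have "a' * (N $ 1 $ 1 * N $ 2 $ 2 - N $ 1 $ 2 * N $ 2 $ 1) = a' * ((z - 1) ^ (r - p) * Z)"
    using rel(3) by (simp only: Z_def ac_simps)
  then have det: "N $ 1 $ 1 * N $ 2 $ 2 - N $ 1 $ 2 * N $ 2 $ 1 = (z - 1) ^ (r - p) * Z"
    using nz' by simp
  have "m11 * m22 - m12 * m21 =
      \<gamma> * Q * Q * c' * (N $ 1 $ 1 * N $ 2 $ 2 - N $ 1 $ 2 * N $ 2 $ 1) / (Z * Z * a')"
    using \<open>z \<noteq> 0\<close> nz' unfolding m11_def m12_def m21_def m22_def \<phi>_def s_def poch Z_def
      A_def[symmetric] B_def[symmetric] C_def[symmetric] Q_def[symmetric] N_def[symmetric]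
    by (simp add: field_simps)
  also have "\<dots> = (z - 1) ^ (r - p) * (\<gamma> * Q) * (Q * c') / (z ^ r * (C * a') * A * B)"
    using \<open>z \<noteq> 0\<close> nz' unfolding det by (simp add: Z_def field_simps)
  finally show "m11 * m22 - m12 * m21 =
      (z - 1) ^ (r - p) * pochhammer \<gamma> r * pochhammer (\<gamma> + 1) r /
        (z ^ r * pochhammer (\<alpha> + 1) p * pochhammer (\<gamma> - \<alpha>) (r - p) * pochhammer (\<gamma> - \<beta>) r)"
    unfolding poch A_def B_def .
qed

theorem lemma3p3:
  fixes p r :: nat
  assumes "1 \<le> p" and "p \<le> r"
  shows "\<exists>\<phi>11 \<phi>12 \<phi>21 \<phi>22 D11 D12 D21 D22.
    poly_form (r - 1) D11 \<phi>11 \<and> poly_form (r - 1) D12 \<phi>12 \<and>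
    poly_form (r - 1) D21 \<phi>21 \<and> poly_form r D22 \<phi>22 \<and>
    (\<forall>\<alpha> \<beta> \<gamma> z::complex.
       \<gamma> \<notin> \<int>\<^sub>\<le>\<^sub>0 \<and> pochhammer (\<gamma> - \<alpha>) (r - p) \<noteq> 0 \<and> pochhammer (\<gamma> - \<beta>) r \<noteq> 0 \<and>
       pochhammer (\<alpha> + 1) p \<noteq> 0 \<and> 0 < norm z \<and> norm z < 1 \<and>
       poly D11 z \<noteq> 0 \<and> poly D12 z \<noteq> 0 \<and> poly D21 z \<noteq> 0 \<and> poly D22 z \<noteq> 0 \<longrightarrow>
       (let s = 1 / (pochhammer (\<gamma> - \<alpha>) (r - p) * pochhammer (\<gamma> - \<beta>) r);
            m11 = s * (pochhammer \<gamma> r * \<phi>11 \<alpha> \<beta> \<gamma> z / pochhammer (\<alpha> + 1) (p - 1));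
            m12 = s * (pochhammer (\<gamma> + 1) (r - 1) * \<phi>12 \<alpha> \<beta> \<gamma> z / pochhammer (\<alpha> + 1) (p - 1));
            m21 = s * (pochhammer \<gamma> (r + 1) * \<phi>21 \<alpha> \<beta> \<gamma> z / pochhammer (\<alpha> + 1) p);
            m22 = s * (pochhammer (\<gamma> + 1) r * \<phi>22 \<alpha> \<beta> \<gamma> z / pochhammer (\<alpha> + 1) p)
        in hyp2f1 (\<alpha> + of_nat p) \<beta> (\<gamma> + of_nat r) z
             = m11 * hyp2f1 \<alpha> \<beta> \<gamma> z + m12 * hyp2f1 (\<alpha> + 1) (\<beta> + 1) (\<gamma> + 1) z \<and>
           hyp2f1 (\<alpha> + of_nat p + 1) (\<beta> + 1) (\<gamma> + of_nat r + 1) z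
             = m21 * hyp2f1 \<alpha> \<beta> \<gamma> z + m22 * hyp2f1 (\<alpha> + 1) (\<beta> + 1) (\<gamma> + 1) z \<and>
           m11 * m22 - m12 * m21
             = (z - 1) ^ (r - p) * pochhammer \<gamma> r * pochhammer (\<gamma> + 1) r /
               (z ^ r * pochhammer (\<alpha> + 1) p * pochhammer (\<gamma> - \<alpha>) (r - p) * pochhammer (\<gamma> - \<beta>) r)))"
proof -
  let ?\<phi> = "\<lambda>i j \<alpha> \<beta> \<gamma> z. contiguity_num p r \<alpha> \<beta> \<gamma> z $ i $ j / z ^ r"
  show ?thesis
  proof (intro exI conjI)
    show "poly_form (r - 1) (monom 1 r) (?\<phi> 1 1)" "poly_form (r - 1) (monom 1 r) (?\<phi> 1 2)"
      "poly_form (r - 1) (monom 1 r) (?\<phi> 2 1)" "poly_form r (monom 1 r) (?\<phi> 2 2)"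
      by (rule ag_degree_le_poly_form ag_degree_le_contiguity_num)+
  qed (simp only: Let_def, use hyp2f1_contiguity_normalized[OF assms] in blast)
qed

end
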